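(* Let $K$ be a field of characteristic $0$, let $G$ be a finite group and let $M$ be a monomial $G$-module given by a basis $(v_i)_{i\in I}$, an action of $G$ on $I$ and maps $\gamma_i\colon G\to K\setminus\{0\}$ ($i\in I$) with $\gamma_i(gh)=\gamma_{hi}(g)\gamma_i(h)$ and $gv_i=\gamma_i(g)v_{gi}$. Let $\alpha$ be a one-dimensional character of $G$ and let $I(M,\alpha)$ be the set of all $i\in I$ such that $\gamma_i$ and $\alpha^{-1}$ coincide on the stabilizer $G_i$. Then: (i) $I(M,\alpha)$ is a $G$-stable subset of $I$; (ii) $a_\alpha(v_i)=0$ for every $i\in I\setminus I(M,\alpha)$, where $a_\alpha=|G|^{-1}\sum_{g\in G}\alpha(g)g\in KG$ acts on $M$ by $z\mapsto a_\alpha z$.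
   Context: A one-dimensional character of $G$ means a group homomorphism $G\to K^\times$. A monomial $G$-module structure on a $K$-linear space $M$ is given by: a basis $(v_i)_{i\in I}$ of $M$; an action of $G$ on the index set $I$; a family of maps $\gamma_i\colon G\to K\setminus\{0\}$, $i\in I$, satisfying $\gamma_i(gh)=\gamma_{hi}(g)\gamma_i(h)$ for all $i\in I$, $g,h\in G$; the action of $G$ on $M$ is then $gv_i=\gamma_i(g)v_{gi}$. $G_i$ denotes the stabilizer of $i\in I$ in $G$. *)

theory Defs
  imports "HOL.Vector_Spaces" "HOL-Algebra.Group_Action"
begin

definition one_dim_char :: "('g, 'b) monoid_scheme \<Rightarrow> ('g \<Rightarrow> 'k::field) \<Rightarrow> bool" where
  "one_dim_char G \<alpha> \<longleftrightarrow>
     (\<forall>g \<in> carrier G. \<alpha> g \<noteq> 0) \<and>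
     (\<forall>g \<in> carrier G. \<forall>h \<in> carrier G. \<alpha> (g \<otimes>\<^bsub>G\<^esub> h) = \<alpha> g * \<alpha> h)"

definition monomial_module ::
  "('g, 'b) monoid_scheme \<Rightarrow> 'i set \<Rightarrow> ('g \<Rightarrow> 'i \<Rightarrow> 'i) \<Rightarrow> ('i \<Rightarrow> 'g \<Rightarrow> 'k::field)
   \<Rightarrow> ('k \<Rightarrow> 'm::ab_group_add \<Rightarrow> 'm) \<Rightarrow> ('i \<Rightarrow> 'm) \<Rightarrow> ('g \<Rightarrow> 'm \<Rightarrow> 'm) \<Rightarrow> bool" where
  "monomial_module G I \<phi> \<gamma> scale v \<rho> \<longleftrightarrow>
     Vector_Spaces.vector_space scale \<and>
     inj_on v I \<and> \<not> Modules.module.dependent scale (v ` I) \<and> Modules.module.span scale (v ` I) = UNIV \<and>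
     group_action G I \<phi> \<and>
     (\<forall>i \<in> I. \<forall>g \<in> carrier G. \<gamma> i g \<noteq> 0) \<and>
     (\<forall>i \<in> I. \<forall>g \<in> carrier G. \<forall>h \<in> carrier G.
        \<gamma> i (g \<otimes>\<^bsub>G\<^esub> h) = \<gamma> (\<phi> h i) g * \<gamma> i h) \<and>
     (\<forall>g \<in> carrier G. Vector_Spaces.linear scale scale (\<rho> g)) \<and>
     (\<forall>g \<in> carrier G. \<forall>i \<in> I. \<rho> g (v i) = scale (\<gamma> i g) (v (\<phi> g i)))"

definition I_M_alpha ::
  "('g, 'b) monoid_scheme \<Rightarrow> 'i set \<Rightarrow> ('g \<Rightarrow> 'i \<Rightarrow> 'i) \<Rightarrow> ('i \<Rightarrow> 'g \<Rightarrow> 'k::field)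
   \<Rightarrow> ('g \<Rightarrow> 'k) \<Rightarrow> 'i set" where
  "I_M_alpha G I \<phi> \<gamma> \<alpha> = {i \<in> I. \<forall>g \<in> stabilizer G \<phi> i. \<gamma> i g = inverse (\<alpha> g)}"

definition a_alpha ::
  "('g, 'b) monoid_scheme \<Rightarrow> ('k::field \<Rightarrow> 'm::ab_group_add \<Rightarrow> 'm) \<Rightarrow> ('g \<Rightarrow> 'm \<Rightarrow> 'm)
   \<Rightarrow> ('g \<Rightarrow> 'k) \<Rightarrow> 'm \<Rightarrow> 'm" where
  "a_alpha G scale \<rho> \<alpha> z =
     scale (inverse (of_nat (card (carrier G))))
       (\<Sum>g \<in> carrier G. scale (\<alpha> g) (\<rho> g z))"

end

theory Submission
  imports Defs
begin

text \<open>For (i), the cocycle identity shows that \<open>\<gamma>\<^sub>g\<^sub>i\<close> on \<open>G\<^sub>g\<^sub>i = g G\<^sub>i g\<inverse>\<close> is \<open>\<gamma>\<^sub>i\<close> transported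
  by conjugation, while \<open>\<alpha>\<close> is a class function. For (ii), pick \<open>k \<in> G\<^sub>i\<close> with
  \<open>c = \<alpha>(k) \<gamma>\<^sub>i(k) \<noteq> 1\<close>; replacing \<open>g\<close> by \<open>g k\<close> in \<open>\<Sum>\<^sub>g \<alpha>(g) g v\<^sub>i\<close> multiplies
  every summand by \<open>c\<close>, so the sum \<open>s\<close> satisfies \<open>s = c s\<close> and vanishes.\<close>

lemma (in group) one_dim_char_one:
  assumes "one_dim_char G \<alpha>"
  shows "\<alpha> \<one> = 1"
proof -
  have "\<alpha> \<one> * \<alpha> \<one> = \<alpha> \<one> * 1" "\<alpha> \<one> \<noteq> 0"
    using assms unfolding one_dim_char_def by (metis one_closed l_one mult_1_right)+
  then show ?thesis by simp
qed

lemma (in group) one_dim_char_conj: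
  assumes "one_dim_char G \<alpha>" "g \<in> carrier G" "h \<in> carrier G"
  shows "\<alpha> (inv g \<otimes> h \<otimes> g) = \<alpha> h"
proof -
  have mult: "\<And>x y. x \<in> carrier G \<Longrightarrow> y \<in> carrier G \<Longrightarrow> \<alpha> (x \<otimes> y) = \<alpha> x * \<alpha> y"
    using assms(1) unfolding one_dim_char_def by blast
  have "\<alpha> (inv g) * \<alpha> g = 1"
    using mult one_dim_char_one[OF assms(1)] assms(2) by (metis inv_closed l_inv)
  then show ?thesis
    using mult assms(2,3) by (simp add: mult_ac)
qed

sublocale group_action \<subseteq> group G
  using group_hom by (rule group_hom.axioms(1))

lemma (in group_action) stabilizer_conj:
  assumes "x \<in> E" "g \<in> carrier G" "h \<in> stabilizer G \<phi> (\<phi> g x)"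
  shows "inv g \<otimes> h \<otimes> g \<in> stabilizer G \<phi> x"
proof -
  have h: "h \<in> carrier G" "\<phi> h (\<phi> g x) = \<phi> g x"
    using assms(3) by (auto simp: stabilizer_def)
  have gx: "\<phi> g x \<in> E" using assms(1,2) element_image by blast
  have "\<phi> (inv g \<otimes> h \<otimes> g) x = \<phi> (inv g) (\<phi> h (\<phi> g x))"
    using assms(1,2) h(1) gx by (simp add: composition_rule)
  also have "\<dots> = \<phi> (inv g) (\<phi> g x)"
    using h(2) by simp
  also have "\<dots> = \<phi> (inv g \<otimes> g) x"
    using composition_rule[OF assms(1) inv_closed[OF assms(2)] assms(2)] by (rule sym)
  also have "\<dots> = x"
    using assms(1,2) id_eq_one by (metis l_inv restrict_apply')
  finally show ?thesis
    using assms(2) h(1) by (simp add: stabilizer_def)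
qed

lemma (in group) sum_right_translation_eigenvector_eq_0:
  assumes "finite (carrier G)" "vector_space scale" "k \<in> carrier G" "c \<noteq> 1"
    and eigen: "\<And>g. g \<in> carrier G \<Longrightarrow> f (g \<otimes> k) = scale c (f g)"
  shows "(\<Sum>g \<in> carrier G. f g) = 0"
proof -
  interpret vector_space scale by fact
  have "bij_betw (\<lambda>g. g \<otimes> k) (carrier G) (carrier G)"
    by (rule bij_betwI[where g="\<lambda>g. g \<otimes> inv k"]) (auto simp: assms(3) m_assoc)
  then have "(\<Sum>g \<in> carrier G. f g) = (\<Sum>g \<in> carrier G. f (g \<otimes> k))"
    by (rule sum.reindex_bij_betw[symmetric])
  also have "\<dots> = scale c (\<Sum>g \<in> carrier G. f g)"
    by (simp add: eigen scale_sum_right)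
  finally have "scale (c - 1) (\<Sum>g \<in> carrier G. f g) = 0"
    by (simp add: scale_left_diff_distrib)
  then show ?thesis using assms(4) by simp
qed

locale monomial_cocycle = group_action G E \<phi> for G (structure) and E and \<phi> +
  fixes \<gamma> :: "'b \<Rightarrow> 'a \<Rightarrow> 'k::field"
  assumes cocycle_nonzero: "x \<in> E \<Longrightarrow> g \<in> carrier G \<Longrightarrow> \<gamma> x g \<noteq> 0"
    and cocycle_mult: "x \<in> E \<Longrightarrow> g \<in> carrier G \<Longrightarrow> h \<in> carrier G \<Longrightarrow>
      \<gamma> x (g \<otimes> h) = \<gamma> (\<phi> h x) g * \<gamma> x h"
begin

lemma cocycle_stabilizer_mult:
  assumes "x \<in> E" "g \<in> carrier G" "k \<in> stabilizer G \<phi> x"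
  shows "\<gamma> x (g \<otimes> k) = \<gamma> x g * \<gamma> x k"
  using assms cocycle_mult by (simp add: stabilizer_def)

lemma cocycle_stabilizer_conj:
  assumes "x \<in> E" "g \<in> carrier G" "h \<in> stabilizer G \<phi> (\<phi> g x)"
  shows "\<gamma> (\<phi> g x) h = \<gamma> x (inv g \<otimes> h \<otimes> g)"
proof -
  have h: "h \<in> carrier G" using assms(3) by (simp add: stabilizer_def)
  have "h \<otimes> g = g \<otimes> (inv g \<otimes> h \<otimes> g)"
    using assms(2) h by (simp add: m_assoc[symmetric])
  then have "\<gamma> (\<phi> g x) h * \<gamma> x g = \<gamma> x g * \<gamma> x (inv g \<otimes> h \<otimes> g)"
    using assms h cocycle_mult cocycle_stabilizer_mult stabilizer_conj by metis
  then show ?thesis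
    using cocycle_nonzero[OF assms(1,2)] by (simp add: mult.commute)
qed

lemma I_M_alpha_closed:
  assumes "one_dim_char G \<alpha>" "g \<in> carrier G" "x \<in> I_M_alpha G E \<phi> \<gamma> \<alpha>"
  shows "\<phi> g x \<in> I_M_alpha G E \<phi> \<gamma> \<alpha>"
proof -
  have x: "x \<in> E" "\<And>k. k \<in> stabilizer G \<phi> x \<Longrightarrow> \<gamma> x k = inverse (\<alpha> k)"
    using assms(3) by (auto simp: I_M_alpha_def)
  have "\<gamma> (\<phi> g x) h = inverse (\<alpha> h)" if h: "h \<in> stabilizer G \<phi> (\<phi> g x)" for h
  proof -
    have "\<gamma> (\<phi> g x) h = \<gamma> x (inv g \<otimes> h \<otimes> g)"
      using cocycle_stabilizer_conj[OF x(1) assms(2) h] .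
    also have "\<dots> = inverse (\<alpha> (inv g \<otimes> h \<otimes> g))"
      using x(2) stabilizer_conj[OF x(1) assms(2) h] .
    also have "\<dots> = inverse (\<alpha> h)"
      using one_dim_char_conj[OF assms(1,2)] h by (simp add: stabilizer_def)
    finally show ?thesis .
  qed
  then show ?thesis
    using x(1) assms(2) element_image by (auto simp: I_M_alpha_def)
qed

end

lemma monomial_module_cocycle:
  assumes "monomial_module G I \<phi> \<gamma> scale v \<rho>"
  shows "monomial_cocycle G I \<phi> \<gamma>"
  using assms unfolding monomial_module_def monomial_cocycle_def monomial_cocycle_axioms_def
  by blast

lemma a_alpha_basis_eq_0:
  assumes "finite (carrier G)" "monomial_module G I \<phi> \<gamma> scale v \<rho>" "one_dim_char G \<alpha>"
    and i: "i \<in> I - I_M_alpha G I \<phi> \<gamma> \<alpha>"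
  shows "a_alpha G scale \<rho> \<alpha> (v i) = 0"
proof -
  interpret monomial_cocycle G I \<phi> \<gamma> using monomial_module_cocycle[OF assms(2)] .
  have vs: "vector_space scale"
    and \<rho>: "\<And>g. g \<in> carrier G \<Longrightarrow> \<rho> g (v i) = scale (\<gamma> i g) (v (\<phi> g i))"
    using assms(2) i unfolding monomial_module_def by auto
  interpret vector_space scale by (fact vs)
  have \<alpha>: "\<And>g h. g \<in> carrier G \<Longrightarrow> h \<in> carrier G \<Longrightarrow> \<alpha> (g \<otimes>\<^bsub>G\<^esub> h) = \<alpha> g * \<alpha> h"
    "\<And>g. g \<in> carrier G \<Longrightarrow> \<alpha> g \<noteq> 0"
    using assms(3) unfolding one_dim_char_def by auto
  obtain k where k: "k \<in> stabilizer G \<phi> i" "\<gamma> i k \<noteq> inverse (\<alpha> k)"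
    using i by (auto simp: I_M_alpha_def)
  have kG: "k \<in> carrier G" and ki: "\<phi> k i = i"
    using k(1) by (auto simp: stabilizer_def)
  define f where "f g = scale (\<alpha> g) (\<rho> g (v i))" for g
  have "f (g \<otimes>\<^bsub>G\<^esub> k) = scale (\<alpha> k * \<gamma> i k) (f g)" if "g \<in> carrier G" for g
    using that i kG ki k(1) \<rho> \<alpha>(1) cocycle_stabilizer_mult
    by (simp add: f_def composition_rule mult_ac)
  moreover have "\<alpha> k * \<gamma> i k \<noteq> 1"
    using k(2) \<alpha>(2)[OF kG] by (metis inverse_unique mult.commute)
  ultimately have "(\<Sum>g \<in> carrier G. f g) = 0"
    using sum_right_translation_eigenvector_eq_0[OF assms(1) vs kG] by blast
  then show ?thesis
    by (simp add: a_alpha_def f_def)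
qed

theorem lemma1p2p2:
  fixes G :: "('g, 'b) monoid_scheme"
    and I :: "'i set"
    and \<phi> :: "'g \<Rightarrow> 'i \<Rightarrow> 'i"
    and \<gamma> :: "'i \<Rightarrow> 'g \<Rightarrow> 'k::field_char_0"
    and scale :: "'k \<Rightarrow> 'm::ab_group_add \<Rightarrow> 'm"
    and v :: "'i \<Rightarrow> 'm"
    and \<rho> :: "'g \<Rightarrow> 'm \<Rightarrow> 'm"
    and \<alpha> :: "'g \<Rightarrow> 'k"
  assumes "group G" and "finite (carrier G)"
    and "monomial_module G I \<phi> \<gamma> scale v \<rho>"
    and "one_dim_char G \<alpha>"
  shows "(\<forall>g \<in> carrier G. \<forall>i \<in> I_M_alpha G I \<phi> \<gamma> \<alpha>. \<phi> g i \<in> I_M_alpha G I \<phi> \<gamma> \<alpha>)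
         \<and> (\<forall>i \<in> I - I_M_alpha G I \<phi> \<gamma> \<alpha>. a_alpha G scale \<rho> \<alpha> (v i) = 0)"
  using monomial_cocycle.I_M_alpha_closed[OF monomial_module_cocycle[OF assms(3)] assms(4)]
    a_alpha_basis_eq_0[OF assms(2-4)]
  by blast

end
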